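(* Let $A+f(A)$ be the free pseudosolution of $(B\le A,f)$, and let $A'$ be a subspace with $B\subseteq A'\subseteq A$. Then \[\delta\big(A+f(A')\,/\,A+f(B)\big)=\delta(A'/B).\] More precisely, for any basis $(e_1,\dots,e_t)$ of $N(A')$ over $N(B)$, the family $(\tilde f(e_1),\dots,\tilde f(e_t))$ is a basis of $N(A+f(A'))$ over $N(A+f(B))$, and $\dim(A+f(A')/A+f(B))=\dim(A'/B)$.
   Context: All vector spaces are over a finite field $\mathbb{F}_q$; $\bigwedge^2X$ is the exterior square. A $2$-nilpotent graded Lie algebra is presented as $V\oplus\bigwedge^2V/N(V)$ with $N(V)\subseteq\bigwedge^2V$ (bracket of $x,y\in V$ = class of $x\wedge y$). For a linear map $g\colon X\to Y$ between subspaces of a common space, $\tilde g\colon\bigwedge^2X\to\bigwedge^2(X+Y)$ is the linear map with $\tilde g(x\wedge y)=g(x)\wedge y+x\wedge g(y)$. A partially defined graded derivation is a linear map $f\colon B\to V$, $B\subseteq V$ finite-dimensional, with $\tilde f(N(B))\subseteq N(V)$, where $N(X):=N(V)\cap\bigwedge^2X$ for $X\subseteq V$. Free pseudosolution of $(B\le A,f)$ (for finite-dimensional $B\subseteq A\subseteq V$ and $f\colon B\to V$ a partially defined graded derivation): take an abstract space $U\supseteq A+f(B)$ with $\dim(U/(A+f(B)))=\dim(A/B)$, extend $f$ to linear $f\colon A\to U$ mapping a basis of $A$ over $B$ onto a basis of $U$ over $A+f(B)$ (so $U=A+f(A)$), and set $N(A+f(A)):=N(A+f(B))+\tilde f(N(A))$,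 with $N(A+f(B))=N(V)\cap\bigwedge^2(A+f(B))$, $N(A)=N(V)\cap\bigwedge^2A$. For subspaces $X\subseteq A+f(A)$ put $N(X):=N(A+f(A))\cap\bigwedge^2X$ (this agrees with $N(V)\cap\bigwedge^2X$ when $X\subseteq A+f(B)$), and for subspaces $X\subseteq A$ put $N(X)=N(V)\cap\bigwedge^2X$. Predimension: for subspaces $Y\subseteq X$ with $X$ finite-dimensional over $Y$, $\delta(X/Y):=\dim(X/Y)-\dim(N(X)/N(Y))$, computed in the relevant ambient algebra. *)

theory Defs
  imports Complex_Main "HOL-Library.Function_Algebras"
begin

text \<open>Vectors are functions 'i => 'k (pointwise operations), so every
  vector space over 'k embeds (take 'i to index a basis). Elements of exterior squares are
  modelled as alternating 2-tensors ('i * 'i) => 'k, with x wedge y given by the 2x2 minors.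
  For a subspace X, the exterior square of X is the span of all x wedge y with x, y in X
  (canonically isomorphic to the abstract exterior square of X).\<close>

definition fscale :: "'k::field \<Rightarrow> ('j \<Rightarrow> 'k) \<Rightarrow> ('j \<Rightarrow> 'k)" where
  "fscale c x = (\<lambda>j. c * x j)"

definition vspan :: "('j \<Rightarrow> 'k::field) set \<Rightarrow> ('j \<Rightarrow> 'k) set" where
  "vspan S = module.span fscale S"

definition vsubspace :: "('j \<Rightarrow> 'k::field) set \<Rightarrow> bool" where
  "vsubspace S = module.subspace fscale S"

definition vdim :: "('j \<Rightarrow> 'k::field) set \<Rightarrow> nat" where
  "vdim S = vector_space.dim fscale S"

definition fin_dim :: "('j \<Rightarrow> 'k::field) set \<Rightarrow> bool" where
  "fin_dim S \<longleftrightarrow> (\<exists>F. finite F \<and> S = vspan F)"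

definition ssum :: "('j \<Rightarrow> 'k::field) set \<Rightarrow> ('j \<Rightarrow> 'k) set \<Rightarrow> ('j \<Rightarrow> 'k) set" where
  "ssum X Y = vspan (X \<union> Y)"

definition wedge :: "('i \<Rightarrow> 'k::field) \<Rightarrow> ('i \<Rightarrow> 'k) \<Rightarrow> ('i \<times> 'i \<Rightarrow> 'k)" where
  "wedge x y = (\<lambda>(i, j). x i * y j - x j * y i)"

definition Lam2 :: "('i \<Rightarrow> 'k::field) set \<Rightarrow> ('i \<times> 'i \<Rightarrow> 'k) set" where
  "Lam2 X = vspan {wedge x y | x y. x \<in> X \<and> y \<in> X}"

definition lin_on :: "('j \<Rightarrow> 'k::field) set \<Rightarrow> (('j \<Rightarrow> 'k) \<Rightarrow> ('l \<Rightarrow> 'k)) \<Rightarrow> bool" where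
  "lin_on X g \<longleftrightarrow> (\<forall>x\<in>X. \<forall>y\<in>X. \<forall>c. g (x + y) = g x + g y \<and> g (fscale c x) = fscale c (g x))"

text \<open>The map tilde g on the exterior square of X: the linear map with
  x wedge y |-> g x wedge y + x wedge g y (only its values on Lam2 X matter).\<close>
definition tilde :: "(('i \<Rightarrow> 'k::field) \<Rightarrow> ('i \<Rightarrow> 'k)) \<Rightarrow> ('i \<Rightarrow> 'k) set
    \<Rightarrow> ('i \<times> 'i \<Rightarrow> 'k) \<Rightarrow> ('i \<times> 'i \<Rightarrow> 'k)" where
  "tilde g X = (SOME h. lin_on (Lam2 X) h \<and>
      (\<forall>x\<in>X. \<forall>y\<in>X. h (wedge x y) = wedge (g x) y + wedge x (g y)))"

definition rel_basis :: "('j \<Rightarrow> 'k::field) set \<Rightarrow> ('j \<Rightarrow> 'k) set \<Rightarrow> nat \<Rightarrow> (nat \<Rightarrow> ('j \<Rightarrow> 'k)) \<Rightarrow> bool" where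
  "rel_basis X Y t e \<longleftrightarrow>
     (\<forall>i<t. e i \<in> X) \<and> vspan (Y \<union> e ` {..<t}) = X \<and>
     (\<forall>u. (\<Sum>i<t. fscale (u i) (e i)) \<in> Y \<longrightarrow> (\<forall>i<t. u i = 0))"

definition delta :: "(('i \<Rightarrow> 'k::field) set \<Rightarrow> ('i \<times> 'i \<Rightarrow> 'k) set)
    \<Rightarrow> ('i \<Rightarrow> 'k) set \<Rightarrow> ('i \<Rightarrow> 'k) set \<Rightarrow> int" where
  "delta N X Y = (int (vdim X) - int (vdim Y)) - (int (vdim (N X)) - int (vdim (N Y)))"

end

theory Submission
  imports Defs
begin

text \<open>Extend \<open>f\<close> to a linear map \<open>F\<close> and let \<open>D = F \<otimes> 1 + 1 \<otimes> F\<close> act on 2-tensors; on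
  \<open>\<Lambda>\<^sup>2 A\<close> it is \<open>tilde f A\<close>. Freeness of the pseudosolution says that every functional \<open>l\<close>
  vanishing on \<open>B\<close> lifts to a functional \<open>\<mu>\<close> vanishing on \<open>A + f(B)\<close> with \<open>\<mu> \<circ> F = l\<close> on \<open>A\<close>.
  Contracting \<open>m \<in> \<Lambda>\<^sup>2 A\<close> with \<open>l\<close> is contracting \<open>D m\<close> with \<open>\<mu>\<close>, so if \<open>D m \<in> \<Lambda>\<^sup>2 (A + f(X))\<close>
  for \<open>B \<subseteq> X \<subseteq> A\<close>, then every functional vanishing on \<open>X\<close> kills \<open>m\<close>, i.e. \<open>m \<in> \<Lambda>\<^sup>2 X\<close>.
  Consequently \<open>N(A + f(A')) = N(A + f(B)) + D(N(A'))\<close>, and \<open>D\<close> maps a basis of \<open>N(A')\<close> over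
  \<open>N(B)\<close> to a basis over \<open>N(A + f(B))\<close>. The same lifting shows that \<open>F\<close> maps a basis of \<open>A'\<close>
  over \<open>B\<close> to a basis of \<open>A + f(A')\<close> over \<open>A + f(B)\<close>; the predimension identity then follows
  by counting.\<close>

lemma vector_space_fscale: "vector_space (fscale :: 'k::field \<Rightarrow> ('j \<Rightarrow> 'k) \<Rightarrow> ('j \<Rightarrow> 'k))"
  by unfold_locales (auto simp: fscale_def algebra_simps fun_eq_iff)

global_interpretation fv: vector_space "fscale :: 'k::field \<Rightarrow> ('j \<Rightarrow> 'k) \<Rightarrow> ('j \<Rightarrow> 'k)"
  by (rule vector_space_fscale)

global_interpretation fk: vector_space_pair "fscale :: 'k::field \<Rightarrow> ('j \<Rightarrow> 'k) \<Rightarrow> ('j \<Rightarrow> 'k)"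
    "(*) :: 'k \<Rightarrow> 'k \<Rightarrow> 'k"
  by unfold_locales (auto simp: algebra_simps)

text \<open>For \<open>(*)\<close> this rule is associativity backwards and loops with \<open>mult.assoc\<close>.\<close>
declare fk.vs2.scale_scale[simp del]

global_interpretation ff: vector_space_pair "fscale :: 'k::field \<Rightarrow> ('j \<Rightarrow> 'k) \<Rightarrow> ('j \<Rightarrow> 'k)"
    "fscale :: 'k \<Rightarrow> ('l \<Rightarrow> 'k) \<Rightarrow> ('l \<Rightarrow> 'k)"
  by unfold_locales

abbreviation lin_functional :: "(('j \<Rightarrow> 'k::field) \<Rightarrow> 'k) \<Rightarrow> bool" where
  "lin_functional l \<equiv> Vector_Spaces.linear fscale (*) l"

abbreviation lin_map :: "(('j \<Rightarrow> 'k::field) \<Rightarrow> ('l \<Rightarrow> 'k)) \<Rightarrow> bool" where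
  "lin_map F \<equiv> Vector_Spaces.linear fscale fscale F"

lemma vspan_eq: "vspan = fv.span"
  by (simp add: vspan_def fun_eq_iff)

lemma vsubspace_eq: "vsubspace = fv.subspace"
  by (simp add: vsubspace_def fun_eq_iff)

lemma vdim_eq: "vdim = fv.dim"
  by (simp add: vdim_def fun_eq_iff)

section \<open>Exterior squares, contractions and the induced derivation\<close>

lemma wedge_add_left: "wedge (x + y) z = wedge x z + wedge y z"
  and wedge_add_right: "wedge x (y + z) = wedge x y + wedge x z"
  and wedge_scale_left: "wedge (fscale a x) y = fscale a (wedge x y)"
  and wedge_scale_right: "wedge x (fscale a y) = fscale a (wedge x y)"
  and wedge_0_left [simp]: "wedge 0 y = 0"
  and wedge_0_right [simp]: "wedge x 0 = 0"
  by (auto simp: fun_eq_iff wedge_def fscale_def algebra_simps)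

lemma Lam2_eq_span: "Lam2 X = fv.span {wedge x y | x y. x \<in> X \<and> y \<in> X}"
  by (simp add: Lam2_def vspan_eq)

lemma subspace_Lam2 [simp]: "fv.subspace (Lam2 X)"
  by (simp add: Lam2_eq_span)

lemma wedge_in_Lam2: "x \<in> X \<Longrightarrow> y \<in> X \<Longrightarrow> wedge x y \<in> Lam2 X"
  unfolding Lam2_eq_span by (rule fv.span_base) blast

lemma Lam2_mono: "X \<subseteq> Y \<Longrightarrow> Lam2 X \<subseteq> Lam2 Y"
  unfolding Lam2_eq_span by (rule fv.span_mono) blast

lemma Lam2_induct:
  assumes "w \<in> Lam2 X" and "fv.subspace P" and "\<And>x y. x \<in> X \<Longrightarrow> y \<in> X \<Longrightarrow> wedge x y \<in> P"
  shows "w \<in> P"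
  using assms(1) unfolding Lam2_eq_span by (induction rule: fv.span_induct) (use assms(2,3) in auto)

lemma wedge_in_span_wedges:
  assumes "x \<in> fv.span S" and "y \<in> fv.span T"
  shows "wedge x y \<in> fv.span {wedge a b | a b. a \<in> S \<and> b \<in> T}"
proof -
  let ?G = "{wedge a b | a b. a \<in> S \<and> b \<in> T}"
  have "wedge a y \<in> fv.span ?G" if "a \<in> S" for a
    using assms(2)
  proof (induction y rule: fv.span_induct_alt)
    case (step c b y)
    have "wedge a b \<in> fv.span ?G" using \<open>a \<in> S\<close> step(1) by (intro fv.span_base) blast
    then show ?case
      unfolding wedge_add_right wedge_scale_right by (intro fv.span_add fv.span_scale step(2))
  qed (simp only: wedge_0_right fv.span_zero)
  with assms(1) show ?thesis
  proof (induction x rule: fv.span_induct_alt)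
    case (step c a x)
    then show ?case
      unfolding wedge_add_left wedge_scale_left by (intro fv.span_add fv.span_scale) auto
  qed (simp only: wedge_0_left fv.span_zero)
qed

lemma Lam2_finite_span:
  assumes "finite T" and "X \<subseteq> fv.span T"
  shows "\<exists>T'. finite T' \<and> Lam2 X \<subseteq> fv.span T'"
proof (intro exI conjI)
  show "finite ((\<lambda>(a, b). wedge a b) ` (T \<times> T))" using assms(1) by simp
  have "Lam2 X \<subseteq> Lam2 (fv.span T)" using assms(2) by (rule Lam2_mono)
  also have "\<dots> \<subseteq> fv.span {wedge a b | a b. a \<in> T \<and> b \<in> T}"
    unfolding Lam2_eq_span by (rule fv.span_minimal) (auto intro: wedge_in_span_wedges)
  also have "{wedge a b | a b. a \<in> T \<and> b \<in> T} = (\<lambda>(a, b). wedge a b) ` (T \<times> T)"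
    by auto
  finally show "Lam2 X \<subseteq> fv.span ((\<lambda>(a, b). wedge a b) ` (T \<times> T))" .
qed

definition contract :: "(('i \<Rightarrow> 'k::field) \<Rightarrow> 'k) \<Rightarrow> ('i \<times> 'i \<Rightarrow> 'k) \<Rightarrow> ('i \<Rightarrow> 'k)" where
  "contract l w = (\<lambda>q. l (\<lambda>r. w (r, q)))"

lemma column_wedge: "(\<lambda>r. wedge x y (r, q)) = fscale (y q) x - fscale (x q) y"
  by (simp add: fun_eq_iff wedge_def fscale_def mult.commute)

lemma linear_contract:
  assumes "lin_functional l"
  shows "lin_map (contract l)"
  unfolding Vector_Spaces.linear_iff
  using fk.linear_add[OF assms, unfolded plus_fun_def] fk.linear_scale[OF assms, unfolded fscale_def]
  by (simp add: vector_space_fscale contract_def fun_eq_iff fscale_def)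

lemma contract_wedge:
  assumes "lin_functional l"
  shows "contract l (wedge x y) = fscale (l x) y - fscale (l y) x"
  unfolding contract_def column_wedge fk.linear_diff[OF assms] fk.linear_scale[OF assms]
  by (simp add: fun_eq_iff fscale_def mult.commute)

lemma contract_eq_0_on_Lam2:
  assumes "lin_functional l" and "\<forall>x\<in>X. l x = 0" and "w \<in> Lam2 X"
  shows "contract l w = 0"
  by (rule ff.linear_eq_0_on_span[OF linear_contract[OF assms(1)] _ assms(3)[unfolded Lam2_eq_span]])
    (use assms(2) in \<open>auto simp: contract_wedge[OF assms(1)]\<close>)

lemma contract_cong_Lam2:
  assumes "lin_functional l" and "lin_functional l'" and "\<forall>x\<in>X. l x = l' x" and "w \<in> Lam2 X"
  shows "contract l w = contract l' w"
  by (rule ff.linear_eq_on[OF linear_contract[OF assms(1)] linear_contract[OF assms(2)]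
        assms(4)[unfolded Lam2_eq_span]])
    (use assms(3) in \<open>auto simp: contract_wedge assms(1,2)\<close>)

text \<open>On alternating tensors this is \<open>F \<otimes> 1 + 1 \<otimes> F\<close>, written via columns only.\<close>
definition tensor_deriv :: "(('i \<Rightarrow> 'k::field) \<Rightarrow> ('i \<Rightarrow> 'k)) \<Rightarrow> ('i \<times> 'i \<Rightarrow> 'k) \<Rightarrow> ('i \<times> 'i \<Rightarrow> 'k)" where
  "tensor_deriv F w = (\<lambda>(p, q). F (\<lambda>r. w (r, q)) p - F (\<lambda>r. w (r, p)) q)"

lemma linear_tensor_deriv:
  assumes "lin_map F"
  shows "lin_map (tensor_deriv F)"
  unfolding Vector_Spaces.linear_iff
  using ff.linear_add[OF assms, unfolded plus_fun_def] ff.linear_scale[OF assms, unfolded fscale_def]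
  by (simp add: vector_space_fscale tensor_deriv_def fun_eq_iff fscale_def right_diff_distrib)

lemma tensor_deriv_wedge:
  assumes "lin_map F"
  shows "tensor_deriv F (wedge x y) = wedge (F x) y + wedge x (F y)"
  unfolding tensor_deriv_def column_wedge ff.linear_diff[OF assms] ff.linear_scale[OF assms]
  by (auto simp: fun_eq_iff fscale_def wedge_def algebra_simps)

lemma tensor_deriv_in_Lam2:
  assumes "lin_map F" and "X \<subseteq> Z" and "F ` X \<subseteq> Z" and "w \<in> Lam2 X"
  shows "tensor_deriv F w \<in> Lam2 Z"
proof -
  have "w \<in> tensor_deriv F -` Lam2 Z"
  proof (rule Lam2_induct[OF assms(4)])
    show "fv.subspace (tensor_deriv F -` Lam2 Z)"
      by (rule ff.linear_subspace_vimage[OF linear_tensor_deriv[OF assms(1)] subspace_Lam2])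
    fix x y assume "x \<in> X" "y \<in> X"
    then show "wedge x y \<in> tensor_deriv F -` Lam2 Z"
      using assms(2,3) by (auto simp: tensor_deriv_wedge[OF assms(1)]
          intro!: fv.subspace_add[OF subspace_Lam2] wedge_in_Lam2)
  qed
  then show ?thesis by simp
qed

lemma contract_tensor_deriv:
  assumes "lin_map F" and "lin_functional l" and "\<forall>x\<in>X. l x = 0" and "w \<in> Lam2 X"
  shows "contract l (tensor_deriv F w) = contract (l \<circ> F) w"
proof -
  have lF: "lin_functional (l \<circ> F)" by (rule Vector_Spaces.linear_compose[OF assms(1,2)])
  have "(contract l \<circ> tensor_deriv F) w = contract (l \<circ> F) w"
  proof (rule ff.linear_eq_on[OF _ linear_contract[OF lF] assms(4)[unfolded Lam2_eq_span]])
    show "lin_map (contract l \<circ> tensor_deriv F)"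
      by (rule Vector_Spaces.linear_compose[OF linear_tensor_deriv linear_contract]) (fact assms)+
    fix g assume "g \<in> {wedge x y | x y. x \<in> X \<and> y \<in> X}"
    then show "(contract l \<circ> tensor_deriv F) g = contract (l \<circ> F) g"
      using assms(3) ff.linear_add[OF linear_contract[OF assms(2)]]
      by (auto simp: tensor_deriv_wedge[OF assms(1)] contract_wedge assms(2) lF)
  qed
  then show ?thesis by simp
qed

lemma lin_on_0: "lin_on S h \<Longrightarrow> 0 \<in> S \<Longrightarrow> h 0 = 0"
  unfolding lin_on_def by (metis fv.scale_zero_left)

lemma tilde_eq_tensor_deriv:
  assumes "lin_map F" and "\<forall>x\<in>X. F x = f x" and "w \<in> Lam2 X"
  shows "tilde f X w = tensor_deriv F w"
proof -
  let ?P = "\<lambda>h. lin_on (Lam2 X) h \<and> (\<forall>x\<in>X. \<forall>y\<in>X. h (wedge x y) = wedge (f x) y + wedge x (f y))"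
  have "?P (tensor_deriv F)"
    using assms(2) ff.linear_add[OF linear_tensor_deriv[OF assms(1)]]
      ff.linear_scale[OF linear_tensor_deriv[OF assms(1)]]
    by (simp add: lin_on_def tensor_deriv_wedge assms(1))
  then have P: "?P (tilde f X)" unfolding tilde_def by (rule someI[of ?P])
  let ?S = "{w \<in> Lam2 X. tilde f X w = tensor_deriv F w}"
  have "w \<in> ?S"
  proof (rule Lam2_induct[OF assms(3)])
    have "0 \<in> Lam2 X" by (rule fv.subspace_0[OF subspace_Lam2])
    moreover note D = linear_tensor_deriv[OF assms(1)]
    ultimately show "fv.subspace ?S"
      using P lin_on_0[OF conjunct1[OF P]] ff.linear_0[OF D] ff.linear_add[OF D] ff.linear_scale[OF D]
      unfolding fv.subspace_def lin_on_def
      by (auto intro: fv.subspace_add[OF subspace_Lam2] fv.subspace_scale[OF subspace_Lam2])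
    fix x y assume "x \<in> X" "y \<in> X"
    then show "wedge x y \<in> ?S"
      using P assms(2) by (simp add: tensor_deriv_wedge[OF assms(1)] wedge_in_Lam2)
  qed
  then show ?thesis by simp
qed

section \<open>Linear algebra relative to a subspace\<close>

lemma lin_on_extend:
  assumes "fv.subspace A" and "lin_on A f"
  shows "\<exists>F. lin_map F \<and> (\<forall>x\<in>A. F x = f x)"
proof -
  obtain BA where BA: "BA \<subseteq> A" "fv.independent BA" "A \<subseteq> fv.span BA"
    by (rule fv.basis_exists)
  obtain F where F: "lin_map F" "\<forall>x\<in>BA. F x = f x"
    using ff.linear_independent_extend[OF BA(2)] by blast
  let ?S = "{x \<in> A. F x = f x}"
  have "fv.subspace ?S"
  proof (rule fv.subspaceI)
    show "0 \<in> ?S"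
      using fv.subspace_0[OF assms(1)] lin_on_0[OF assms(2)] ff.linear_0[OF F(1)] by simp
  next
    fix x y assume "x \<in> ?S" "y \<in> ?S"
    then show "x + y \<in> ?S"
      using assms(2) fv.subspace_add[OF assms(1)] ff.linear_add[OF F(1)] unfolding lin_on_def by auto
  next
    fix c x assume "x \<in> ?S"
    then show "fscale c x \<in> ?S"
      using assms(2) fv.subspace_scale[OF assms(1)] ff.linear_scale[OF F(1)] unfolding lin_on_def by auto
  qed
  then have "x \<in> ?S" if "x \<in> A" for x
    using fv.span_subspace_induct[of x BA ?S] BA F(2) that by blast
  with F(1) show ?thesis by blast
qed

lemma separating_functional:
  assumes "fv.subspace Y" and "x \<notin> Y"
  shows "\<exists>l. lin_functional l \<and> (\<forall>y\<in>Y. l y = 0) \<and> l x = 1"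
proof -
  obtain BY where BY: "BY \<subseteq> Y" "fv.independent BY" "Y \<subseteq> fv.span BY"
    by (rule fv.basis_exists)
  have "x \<notin> fv.span BY" using assms fv.span_minimal[OF BY(1)] by blast
  then have "fv.independent (insert x BY)" by (rule fv.independent_insertI[OF _ BY(2)])
  then obtain l where l: "lin_functional l" "\<forall>z\<in>insert x BY. l z = (if z = x then 1 else 0)"
    using fk.linear_independent_extend[where f="\<lambda>z. if z = x then 1 else 0"] by blast
  have "x \<notin> BY" using assms BY(1) by blast
  then have "l y = 0" if "y \<in> Y" for y
    using l BY(3) that by (auto intro: fk.linear_eq_0_on_span[OF l(1), of BY])
  with l show ?thesis by auto
qed

lemma sum_fscale_indicator:
  assumes "finite I" and "j \<in> I"
  shows "(\<Sum>i\<in>I. fscale (if i = j then a else 0) (e i)) = fscale a (e j)"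
proof -
  have "(\<Sum>i\<in>I. fscale (if i = j then a else 0) (e i)) = (\<Sum>i\<in>I. if i = j then fscale a (e j) else 0)"
    by (rule sum.cong) auto
  with assms show ?thesis by simp
qed

lemma span_Un_image_sum:
  assumes Y: "fv.subspace Y" and I: "finite I" and x: "x \<in> fv.span (Y \<union> e ` I)"
  shows "\<exists>y a. y \<in> Y \<and> x = y + (\<Sum>i\<in>I. fscale (a i) (e i))"
proof -
  let ?S = "{y + (\<Sum>i\<in>I. fscale (a i) (e i)) | y a. y \<in> Y}"
  have "x \<in> ?S"
  proof (rule fv.span_subspace_induct[OF x])
    show "fv.subspace ?S"
    proof (rule fv.subspaceI)
      show "0 \<in> ?S"
        using fv.subspace_0[OF Y] by (intro CollectI exI[of _ 0] exI[of _ "\<lambda>_. 0"]) simp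
    next
      fix u v assume "u \<in> ?S" "v \<in> ?S"
      then obtain y1 a1 y2 a2 where y: "y1 \<in> Y" "y2 \<in> Y"
        and uv: "u = y1 + (\<Sum>i\<in>I. fscale (a1 i) (e i))" "v = y2 + (\<Sum>i\<in>I. fscale (a2 i) (e i))"
        by blast
      then have "u + v = (y1 + y2) + (\<Sum>i\<in>I. fscale (a1 i + a2 i) (e i))"
        by (simp add: fv.scale_left_distrib sum.distrib algebra_simps)
      then show "u + v \<in> ?S"
        using y fv.subspace_add[OF Y] by (intro CollectI exI[of _ "y1 + y2"] exI[of _ "\<lambda>i. a1 i + a2 i"]) simp
    next
      fix c u assume "u \<in> ?S"
      then obtain y a where "y \<in> Y" "u = y + (\<Sum>i\<in>I. fscale (a i) (e i))" by blast
      moreover from this have "fscale c u = fscale c y + (\<Sum>i\<in>I. fscale (c * a i) (e i))"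
        by (simp add: fv.scale_right_distrib fv.scale_sum_right)
      ultimately show "fscale c u \<in> ?S"
        using fv.subspace_scale[OF Y] by (intro CollectI exI[of _ "fscale c y"] exI[of _ "\<lambda>i. c * a i"]) simp
    qed
  next
    fix z assume "z \<in> Y \<union> e ` I"
    then show "z \<in> ?S"
    proof
      assume "z \<in> Y"
      then show ?thesis by (intro CollectI exI[of _ z] exI[of _ "\<lambda>_. 0"]) simp
    next
      assume "z \<in> e ` I"
      then obtain j where "j \<in> I" "z = e j" by blast
      then show ?thesis
        using I fv.subspace_0[OF Y]
        by (intro CollectI exI[of _ 0] exI[of _ "\<lambda>i. if i = j then 1 else 0"]) (simp add: sum_fscale_indicator)
    qed
  qed
  then show ?thesis by blast
qed

lemma rel_independent_notin_span:
  fixes t :: nat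
  assumes Y: "fv.subspace Y"
    and ind: "\<forall>u. (\<Sum>i<t. fscale (u i) (e i)) \<in> Y \<longrightarrow> (\<forall>i<t. u i = 0)"
    and i: "i < t" and J: "J \<subseteq> {..<t}" "i \<notin> J"
  shows "e i \<notin> fv.span (Y \<union> e ` J)"
proof
  assume "e i \<in> fv.span (Y \<union> e ` J)"
  then obtain y a where y: "y \<in> Y" and eq: "e i = y + (\<Sum>j\<in>J. fscale (a j) (e j))"
    using span_Un_image_sum[OF Y finite_subset[OF J(1) finite_lessThan]] by blast
  define u where "u j = (if j = i then 1 else 0) - (if j \<in> J then a j else 0)" for j
  have "fscale (u j) (e j) = fscale (if j = i then 1 else 0) (e j) - (if j \<in> J then fscale (a j) (e j) else 0)"
    for j by (simp add: u_def fv.scale_left_diff_distrib)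
  then have "(\<Sum>j<t. fscale (u j) (e j))
      = (\<Sum>j<t. fscale (if j = i then 1 else 0) (e j)) - (\<Sum>j<t. if j \<in> J then fscale (a j) (e j) else 0)"
    by (simp add: sum_subtractf)
  also have "\<dots> = e i - (\<Sum>j\<in>J. fscale (a j) (e j))"
    using i J(1) by (simp add: sum_fscale_indicator sum.inter_restrict[symmetric] Int_absorb1)
  also have "\<dots> = y" by (rule diff_eq_eq[THEN iffD2, OF eq])
  finally have "(\<Sum>j<t. fscale (u j) (e j)) \<in> Y" using y by simp
  then have "u i = 0" using ind i by blast
  then show False using J(2) by (simp add: u_def)
qed

lemma dim_insert_notin_span:
  assumes "finite T" and "S \<subseteq> fv.span T" and "x \<notin> fv.span S"
  shows "fv.dim (insert x S) = fv.dim S + 1"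
proof -
  obtain B where B: "B \<subseteq> S" "fv.independent B" "S \<subseteq> fv.span B" "card B = fv.dim S"
    by (rule fv.basis_exists)
  have "finite B" using fv.independent_span_bound[OF assms(1) B(2)] B(1) assms(2) by blast
  have span_B: "fv.span B = fv.span S"
    unfolding fv.span_eq using B(1,3) fv.span_superset[of S] by blast
  then have "fv.independent (insert x B)" using assms(3) B(2) by (simp add: fv.independent_insertI)
  moreover have "x \<notin> B" using assms(3) B(1) fv.span_superset by blast
  ultimately have "fv.dim (fv.span (insert x B)) = card B + 1"
    using \<open>finite B\<close> by (simp add: fv.dim_eq_card_independent)
  moreover have "fv.span (insert x B) = fv.span (insert x S)" using span_B by (simp add: fv.span_insert)
  ultimately show ?thesis using B(4) by (metis fv.dim_span)
qed

lemma dim_span_rel_independent: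
  fixes t :: nat
  assumes Y: "fv.subspace Y" and T: "finite T" "Y \<subseteq> fv.span T"
    and ind: "\<forall>u. (\<Sum>i<t. fscale (u i) (e i)) \<in> Y \<longrightarrow> (\<forall>i<t. u i = 0)"
  shows "fv.dim (fv.span (Y \<union> e ` {..<t})) = fv.dim Y + t"
proof -
  have "fv.dim (Y \<union> e ` {..<k}) = fv.dim Y + k" if "k \<le> t" for k
    using that
  proof (induction k)
    case (Suc k)
    have "e k \<notin> fv.span (Y \<union> e ` {..<k})"
      using Suc.prems by (intro rel_independent_notin_span[OF Y ind]) auto
    moreover have "Y \<union> e ` {..<k} \<subseteq> fv.span (T \<union> e ` {..<k})"
      using T(2) fv.span_mono[of T "T \<union> e ` {..<k}"] fv.span_superset[of "T \<union> e ` {..<k}"] by blast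
    ultimately have "fv.dim (insert (e k) (Y \<union> e ` {..<k})) = fv.dim (Y \<union> e ` {..<k}) + 1"
      using T(1) by (intro dim_insert_notin_span) auto
    moreover have "Y \<union> e ` {..<Suc k} = insert (e k) (Y \<union> e ` {..<k})"
      by (auto simp: lessThan_Suc)
    ultimately show ?case using Suc by simp
  qed simp
  then show ?thesis by simp
qed

lemma dim_rel_basis:
  assumes "rel_basis X Y t e" and "fv.subspace Y" and "finite T" and "Y \<subseteq> fv.span T"
  shows "fv.dim X = fv.dim Y + t"
  using assms dim_span_rel_independent[OF assms(2-4)] by (auto simp: rel_basis_def vspan_eq)

lemma rel_basis_span_Un:
  assumes Y: "fv.subspace Y" and "finite S"
  shows "\<exists>t e. rel_basis (fv.span (Y \<union> S)) Y t e"
  using assms(2)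
proof (induction S rule: finite_induct)
  case empty
  show ?case by (rule exI[of _ 0]) (use Y in \<open>auto simp: rel_basis_def vspan_eq\<close>)
next
  case (insert x S)
  let ?X = "fv.span (Y \<union> S)"
  obtain t e where e: "rel_basis ?X Y t e" using insert.IH by blast
  then have eX: "\<forall>i<t. e i \<in> ?X" and spe: "fv.span (Y \<union> e ` {..<t}) = ?X"
    and ind: "\<forall>u. (\<Sum>i<t. fscale (u i) (e i)) \<in> Y \<longrightarrow> (\<forall>i<t. u i = 0)"
    by (auto simp: rel_basis_def vspan_eq)
  have span_insert: "fv.span (Y \<union> insert x S) = fv.span (insert x ?X)"
    by (simp add: fv.span_insert fv.span_span)
  show ?case
  proof (cases "x \<in> ?X")
    case True
    then have "fv.span (Y \<union> insert x S) = ?X"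
      unfolding span_insert by (simp add: fv.span_redundant fv.span_span)
    with e show ?thesis by auto
  next
    case False
    let ?e = "e(t := x)"
    have e_t: "?e ` {..<Suc t} = insert x (e ` {..<t})"
      by (auto simp: lessThan_Suc)
    have sum_e: "(\<Sum>i<Suc t. fscale (u i) (?e i)) = (\<Sum>i<t. fscale (u i) (e i)) + fscale (u t) x" for u
    proof -
      have "(\<Sum>i<t. fscale (u i) (?e i)) = (\<Sum>i<t. fscale (u i) (e i))" by (rule sum.cong) auto
      then show ?thesis by simp
    qed
    have "rel_basis (fv.span (insert x ?X)) Y (Suc t) ?e"
      unfolding rel_basis_def vspan_eq
    proof (intro conjI allI impI)
      fix i assume "i < Suc t"
      then have "?e i \<in> insert x ?X" using eX by (auto simp: less_Suc_eq)
      then show "?e i \<in> fv.span (insert x ?X)" by (rule fv.span_base)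
    next
      show "fv.span (Y \<union> ?e ` {..<Suc t}) = fv.span (insert x ?X)"
        unfolding e_t Un_insert_right fv.span_insert spe fv.span_span ..
    next
      fix u i assume sum: "(\<Sum>i<Suc t. fscale (u i) (?e i)) \<in> Y" and i: "i < Suc t"
      have "(\<Sum>i<t. fscale (u i) (e i)) \<in> ?X"
        using eX by (intro fv.subspace_sum[OF fv.subspace_span] fv.span_scale) auto
      moreover have "(\<Sum>i<Suc t. fscale (u i) (?e i)) \<in> ?X"
        using sum fv.span_superset[of "Y \<union> S"] by blast
      ultimately have "(\<Sum>i<Suc t. fscale (u i) (?e i)) - (\<Sum>i<t. fscale (u i) (e i)) \<in> ?X"
        by (rule fv.span_diff[rotated])
      then have "fscale (u t) x \<in> ?X" unfolding sum_e by simp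
      then have "fscale (inverse (u t)) (fscale (u t) x) \<in> ?X" by (rule fv.span_scale)
      then have ut: "u t = 0" using False by (cases "u t = 0") auto
      with sum have "(\<Sum>i<t. fscale (u i) (e i)) \<in> Y" by (simp add: fv.scale_zero_left)
      with ind ut i show "u i = 0" by (auto simp: less_Suc_eq)
    qed
    then show ?thesis using span_insert by auto
  qed
qed

lemma rel_basis_exists:
  assumes "fv.subspace X" and "fv.subspace Y" and "Y \<subseteq> X" and "finite T" and "X \<subseteq> fv.span T"
  shows "\<exists>t e. rel_basis X Y t e"
proof -
  obtain BX where BX: "BX \<subseteq> X" "fv.independent BX" "X \<subseteq> fv.span BX"
    by (rule fv.basis_exists)
  have "finite BX" using fv.independent_span_bound[OF assms(4) BX(2)] BX(1) assms(5) by blast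
  moreover have "fv.span (Y \<union> BX) = X"
  proof
    show "fv.span (Y \<union> BX) \<subseteq> X" using assms(1,3) BX(1) by (intro fv.span_minimal) auto
    show "X \<subseteq> fv.span (Y \<union> BX)" using BX(3) fv.span_mono[of BX "Y \<union> BX"] by blast
  qed
  ultimately show ?thesis using rel_basis_span_Un[OF assms(2), of BX] by simp
qed

lemma rel_basis_cong:
  assumes "\<And>i. i < t \<Longrightarrow> e i = e' i"
  shows "rel_basis X Y t e = rel_basis X Y t e'"
proof -
  have "e ` {..<t} = e' ` {..<t}" using assms by (auto intro!: image_cong)
  moreover have "(\<Sum>i<t. fscale (u i) (e i)) = (\<Sum>i<t. fscale (u i) (e' i))" for u
    using assms by (intro sum.cong) auto
  ultimately show ?thesis unfolding rel_basis_def using assms by auto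
qed

lemma rel_independent_functional:
  fixes t :: nat
  assumes Y: "fv.subspace Y"
    and ind: "\<forall>u. (\<Sum>i<t. fscale (u i) (e i)) \<in> Y \<longrightarrow> (\<forall>i<t. u i = 0)"
  shows "\<exists>\<mu>. lin_functional \<mu> \<and> (\<forall>y\<in>Y. \<mu> y = 0) \<and> (\<forall>i<t. \<mu> (e i) = v i)"
proof -
  let ?Z = "\<lambda>i. fv.span (Y \<union> e ` ({..<t} - {i}))"
  have ex_L: "\<exists>l. lin_functional l \<and> (\<forall>z\<in>?Z i. l z = 0) \<and> l (e i) = 1" if "i < t" for i
    by (rule separating_functional[OF fv.subspace_span rel_independent_notin_span[OF Y ind that]]) auto
  define L where "L i = (SOME l. lin_functional l \<and> (\<forall>z\<in>?Z i. l z = 0) \<and> l (e i) = 1)" for i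
  have "lin_functional (L i) \<and> (\<forall>z\<in>?Z i. L i z = 0) \<and> L i (e i) = 1" if "i < t" for i
    unfolding L_def by (rule someI_ex[OF ex_L[OF that]])
  then have L: "\<And>i. i < t \<Longrightarrow> lin_functional (L i)"
    "\<And>i z. i < t \<Longrightarrow> z \<in> ?Z i \<Longrightarrow> L i z = 0" "\<And>i. i < t \<Longrightarrow> L i (e i) = 1"
    by blast+
  define \<mu> where "\<mu> x = (\<Sum>i<t. v i * L i x)" for x
  have "lin_functional \<mu>"
    unfolding \<mu>_def by (rule fk.linear_compose_sum) (auto intro: fk.linear_compose_scale_right L(1))
  moreover have "\<mu> y = 0" if "y \<in> Y" for y
  proof -
    have "L i y = 0" if "i < t" for i
      using L(2)[OF that] \<open>y \<in> Y\<close> fv.span_superset[of "Y \<union> e ` ({..<t} - {i})"] by blast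
    then show ?thesis by (simp add: \<mu>_def)
  qed
  moreover have "\<mu> (e j) = v j" if j: "j < t" for j
  proof -
    have "L i (e j) = (if i = j then 1 else 0)" if i: "i < t" for i
    proof (cases "i = j")
      case False
      then have "e j \<in> ?Z i" using j by (intro fv.span_base) auto
      with False show ?thesis using L(2)[OF i] by simp
    qed (use L(3) i in simp)
    then have "(\<Sum>i<t. v i * L i (e j)) = (\<Sum>i<t. if i = j then v j else 0)"
      by (intro sum.cong) auto
    with j show ?thesis by (simp add: \<mu>_def)
  qed
  ultimately show ?thesis by blast
qed

section \<open>Detecting \<open>\<Lambda>\<^sup>2 X\<close> by contractions\<close>

lemma Lam2_insert_decomp:
  assumes Y: "fv.subspace Y" and m: "m \<in> Lam2 (fv.span (insert x Y))"
  shows "\<exists>w y. w \<in> Lam2 Y \<and> y \<in> Y \<and> m = w + wedge x y"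
proof -
  let ?S = "{w + wedge x y | w y. w \<in> Lam2 Y \<and> y \<in> Y}"
  have S: "w + wedge x y \<in> ?S" if "w \<in> Lam2 Y" "y \<in> Y" for w y
    using that by blast
  have "m \<in> ?S"
  proof (rule Lam2_induct[OF m])
    show "fv.subspace ?S"
    proof (rule fv.subspaceI)
      show "0 \<in> ?S" using S[OF fv.subspace_0[OF subspace_Lam2] fv.subspace_0[OF Y]] by simp
    next
      fix u v assume "u \<in> ?S" "v \<in> ?S"
      then obtain w1 y1 w2 y2 where h: "w1 \<in> Lam2 Y" "y1 \<in> Y" "u = w1 + wedge x y1"
        "w2 \<in> Lam2 Y" "y2 \<in> Y" "v = w2 + wedge x y2" by blast
      have "(w1 + w2) + wedge x (y1 + y2) \<in> ?S"
        using h Y by (intro S fv.subspace_add subspace_Lam2)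
      moreover have "u + v = (w1 + w2) + wedge x (y1 + y2)"
        using h by (simp add: wedge_add_right add_ac)
      ultimately show "u + v \<in> ?S" by simp
    next
      fix a u assume "u \<in> ?S"
      then obtain w y where h: "w \<in> Lam2 Y" "y \<in> Y" "u = w + wedge x y" by blast
      have "fscale a w + wedge x (fscale a y) \<in> ?S"
        using h Y by (intro S fv.subspace_scale subspace_Lam2)
      moreover have "fscale a u = fscale a w + wedge x (fscale a y)"
        using h by (simp add: wedge_scale_right fv.scale_right_distrib)
      ultimately show "fscale a u \<in> ?S" by simp
    qed
  next
    fix p q assume "p \<in> fv.span (insert x Y)" "q \<in> fv.span (insert x Y)"
    then obtain a b where a: "p - fscale a x \<in> Y" and b: "q - fscale b x \<in> Y"
      using fv.span_eq_iff[THEN iffD2, OF Y] by (auto simp: fv.span_breakdown_eq)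
    let ?p = "p - fscale a x" and ?q = "q - fscale b x"
    have "wedge p q = wedge (?p + fscale a x) (?q + fscale b x)" by simp
    also have "\<dots> = wedge ?p ?q + wedge x (fscale a ?q - fscale b ?p)"
      by (auto simp: fun_eq_iff wedge_def fscale_def algebra_simps)
    also have "\<dots> \<in> ?S"
      using a b Y by (intro S wedge_in_Lam2) (simp_all add: fv.subspace_diff fv.subspace_scale)
    finally show "wedge p q \<in> ?S" .
  qed
  then show ?thesis by blast
qed

lemma Lam2_insert_by_contractions:
  assumes Y: "fv.subspace Y" and m: "m \<in> Lam2 (fv.span (insert x Y))"
    and contr: "\<And>l. lin_functional l \<Longrightarrow> \<forall>y\<in>Y. l y = 0 \<Longrightarrow> contract l m = 0"
  shows "m \<in> Lam2 Y"
proof -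
  obtain w y where wy: "w \<in> Lam2 Y" "y \<in> Y" "m = w + wedge x y"
    using Lam2_insert_decomp[OF Y m] by blast
  show ?thesis
  proof (cases "x \<in> Y")
    case True
    then show ?thesis using wy fv.subspace_add[OF subspace_Lam2 wy(1) wedge_in_Lam2[OF True wy(2)]] by simp
  next
    case False
    obtain l where l: "lin_functional l" "\<forall>y\<in>Y. l y = 0" "l x = 1"
      using separating_functional[OF Y False] by blast
    have "contract l m = contract l w + contract l (wedge x y)"
      using wy(3) ff.linear_add[OF linear_contract[OF l(1)]] by simp
    also have "\<dots> = y"
      using l wy(2) contract_eq_0_on_Lam2[OF l(1,2) wy(1)] by (simp add: contract_wedge)
    finally have "y = 0" using contr l by simp
    then show ?thesis using wy by simp
  qed
qed

lemma Lam2_by_contractions: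
  assumes S: "finite S" and X: "fv.subspace X" and m: "m \<in> Lam2 (fv.span (X \<union> S))"
    and contr: "\<And>l. lin_functional l \<Longrightarrow> \<forall>x\<in>X. l x = 0 \<Longrightarrow> contract l m = 0"
  shows "m \<in> Lam2 X"
  using S m
proof (induction S rule: finite_induct)
  case empty
  then show ?case using fv.span_eq_iff[THEN iffD2, OF X] by simp
next
  case (insert x S)
  have "fv.span (X \<union> insert x S) = fv.span (insert x (fv.span (X \<union> S)))"
    by (simp add: fv.span_insert fv.span_span)
  then have "m \<in> Lam2 (fv.span (insert x (fv.span (X \<union> S))))" using insert.prems by simp
  then have "m \<in> Lam2 (fv.span (X \<union> S))"
  proof (rule Lam2_insert_by_contractions[OF fv.subspace_span])
    fix l assume "lin_functional l" "\<forall>y\<in>fv.span (X \<union> S). l y = 0"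
    then show "contract l m = 0" using contr fv.span_superset[of "X \<union> S"] by blast
  qed
  then show ?case by (rule insert.IH)
qed

section \<open>Free pseudosolutions\<close>

locale free_extension =
  fixes A B :: "('i \<Rightarrow> 'k::field) set" and F :: "('i \<Rightarrow> 'k) \<Rightarrow> ('i \<Rightarrow> 'k)"
    and s :: nat and c :: "nat \<Rightarrow> ('i \<Rightarrow> 'k)"
  assumes subspace_A: "fv.subspace A" and subspace_B: "fv.subspace B" and B_subset_A: "B \<subseteq> A"
    and fin_dim_A: "fin_dim A"
    and linear_F: "lin_map F"
    and basis_A: "rel_basis A B s c"
    and free: "\<forall>u. (\<Sum>i<s. fscale (u i) (F (c i))) \<in> fv.span (A \<union> F ` B) \<longrightarrow> (\<forall>i<s. u i = 0)"
begin

definition AF :: "('i \<Rightarrow> 'k) set \<Rightarrow> ('i \<Rightarrow> 'k) set" where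
  "AF X = fv.span (A \<union> F ` X)"

lemma subspace_AF: "fv.subspace (AF X)"
  by (simp add: AF_def)

lemma A_subset_AF: "A \<subseteq> AF X"
  unfolding AF_def using fv.span_superset[of "A \<union> F ` X"] by blast

lemma image_subset_AF: "F ` X \<subseteq> AF X"
  unfolding AF_def using fv.span_superset[of "A \<union> F ` X"] by blast

lemma AF_mono: "X \<subseteq> Y \<Longrightarrow> AF X \<subseteq> AF Y"
  unfolding AF_def by (rule fv.span_mono) blast

lemma finite_span_A: obtains T where "finite T" and "A = fv.span T"
  using fin_dim_A by (auto simp: fin_dim_def vspan_eq)

lemma AF_subset_finite_span: obtains T where "finite T" and "AF A \<subseteq> fv.span T"
proof -
  obtain T where T: "finite T" "A = fv.span T" by (rule finite_span_A)
  have FA: "F ` A = fv.span (F ` T)" unfolding T(2) by (rule ff.linear_span_image[OF linear_F, symmetric])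
  have "A \<subseteq> fv.span (T \<union> F ` T)" unfolding T(2) by (rule fv.span_mono) blast
  moreover have "F ` A \<subseteq> fv.span (T \<union> F ` T)" unfolding FA by (rule fv.span_mono) blast
  ultimately have "AF A \<subseteq> fv.span (T \<union> F ` T)" unfolding AF_def by (intro fv.span_minimal) auto
  then show ?thesis by (rule that[rotated]) (simp add: T(1))
qed

text \<open>The only use of freeness.\<close>
lemma lift_functional:
  assumes l: "lin_functional l" "\<forall>b\<in>B. l b = 0"
  shows "\<exists>\<mu>. lin_functional \<mu> \<and> (\<forall>w\<in>AF B. \<mu> w = 0) \<and> (\<forall>a\<in>A. \<mu> (F a) = l a)"
proof -
  obtain \<mu> where \<mu>: "lin_functional \<mu>" "\<forall>w\<in>AF B. \<mu> w = 0" "\<forall>i<s. \<mu> (F (c i)) = l (c i)"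
    using rel_independent_functional[OF subspace_AF free[folded AF_def], of "\<lambda>i. l (c i)"] by blast
  have "(\<mu> \<circ> F) a = l a" if "a \<in> A" for a
  proof (rule fk.linear_eq_on[OF Vector_Spaces.linear_compose[OF linear_F \<mu>(1)] l(1)])
    show "a \<in> fv.span (B \<union> c ` {..<s})" using basis_A that by (simp add: rel_basis_def vspan_eq)
    fix x assume "x \<in> B \<union> c ` {..<s}"
    then show "(\<mu> \<circ> F) x = l x" using \<mu> l(2) image_subset_AF[of B] by auto
  qed
  with \<mu> show ?thesis by auto
qed

lemma F_mem_AF_B_iff:
  assumes "a \<in> A"
  shows "F a \<in> AF B \<longleftrightarrow> a \<in> B"
proof
  assume Fa: "F a \<in> AF B"
  show "a \<in> B"
  proof (rule ccontr)
    assume "a \<notin> B"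
    then obtain l where l: "lin_functional l" "\<forall>b\<in>B. l b = 0" "l a = 1"
      using separating_functional[OF subspace_B] by blast
    then obtain \<mu> where "\<forall>w\<in>AF B. \<mu> w = 0" "\<forall>a\<in>A. \<mu> (F a) = l a"
      using lift_functional by blast
    then have "\<mu> (F a) = 0" and "\<mu> (F a) = 1" using Fa assms l(3) by auto
    then show False by simp
  qed
qed (use image_subset_AF in blast)

lemma rel_basis_AF:
  assumes A': "fv.subspace A'" "B \<subseteq> A'" "A' \<subseteq> A" and g: "rel_basis A' B d g"
  shows "rel_basis (AF A') (AF B) d (F \<circ> g)"
proof -
  from g have gA': "\<forall>i<d. g i \<in> A'" and span_g: "fv.span (B \<union> g ` {..<d}) = A'"
    and ind: "\<forall>u. (\<Sum>i<d. fscale (u i) (g i)) \<in> B \<longrightarrow> (\<forall>i<d. u i = 0)"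
    by (auto simp: rel_basis_def vspan_eq)
  let ?X = "fv.span (AF B \<union> (F \<circ> g) ` {..<d})"
  show ?thesis
    unfolding rel_basis_def vspan_eq
  proof (intro conjI allI impI)
    fix i assume "i < d"
    then show "(F \<circ> g) i \<in> AF A'" using gA' image_subset_AF[of A'] by auto
  next
    show "?X = AF A'"
    proof
      show "?X \<subseteq> AF A'"
        using AF_mono[OF A'(2)] gA' image_subset_AF[of A'] by (intro fv.span_minimal subspace_AF) auto
      have "F ` A' = fv.span (F ` (B \<union> g ` {..<d}))"
        unfolding span_g[symmetric] by (rule ff.linear_span_image[OF linear_F, symmetric])
      also have "\<dots> \<subseteq> ?X"
        using image_subset_AF[of B] by (intro fv.span_mono) (auto simp: image_comp)
      finally have "A \<union> F ` A' \<subseteq> ?X"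
        using A_subset_AF[of B] fv.span_superset[of "AF B \<union> (F \<circ> g) ` {..<d}"] by blast
      then show "AF A' \<subseteq> ?X" unfolding AF_def by (intro fv.span_minimal) simp_all
    qed
  next
    fix u i assume u: "(\<Sum>i<d. fscale (u i) ((F \<circ> g) i)) \<in> AF B" and i: "i < d"
    let ?v = "\<Sum>i<d. fscale (u i) (g i)"
    have "?v \<in> A'" using gA' by (intro fv.subspace_sum[OF A'(1)] fv.subspace_scale[OF A'(1)]) auto
    moreover have "F ?v \<in> AF B"
      using u by (simp add: ff.linear_sum[OF linear_F] ff.linear_scale[OF linear_F])
    ultimately have "?v \<in> B" using F_mem_AF_B_iff A'(3) by blast
    then show "u i = 0" using ind i by blast
  qed
qed

lemma dim_AF:
  assumes "fv.subspace A'" and "B \<subseteq> A'" and "A' \<subseteq> A"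
  shows "int (fv.dim (AF A')) - int (fv.dim (AF B)) = int (fv.dim A') - int (fv.dim B)"
proof -
  obtain T where T: "finite T" "A = fv.span T" by (rule finite_span_A)
  obtain T' where T': "finite T'" "AF A \<subseteq> fv.span T'" by (rule AF_subset_finite_span)
  obtain d g where g: "rel_basis A' B d g"
    using rel_basis_exists[OF assms(1) subspace_B assms(2) T(1)] assms(3) T(2) by blast
  have "fv.dim A' = fv.dim B + d"
    using dim_rel_basis[OF g subspace_B T(1)] B_subset_A T(2) by simp
  moreover have "fv.dim (AF A') = fv.dim (AF B) + d"
    using dim_rel_basis[OF rel_basis_AF[OF assms g] subspace_AF T'(1)] AF_mono[OF B_subset_A] T'(2)
    by simp
  ultimately show ?thesis by simp
qed

text \<open>Contracting \<open>m\<close> with \<open>l\<close> is contracting \<open>tensor_deriv F m\<close> with the lift \<open>\<mu>\<close> of \<open>l\<close>,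
  which vanishes on \<open>AF X\<close>.\<close>
lemma Lam2_of_tensor_deriv_in_Lam2_AF:
  assumes X: "fv.subspace X" "B \<subseteq> X" "X \<subseteq> A"
    and m: "m \<in> Lam2 A" and Dm: "tensor_deriv F m \<in> Lam2 (AF X)"
  shows "m \<in> Lam2 X"
proof -
  obtain T where T: "finite T" "A = fv.span T" by (rule finite_span_A)
  show ?thesis
  proof (rule Lam2_by_contractions[OF T(1) X(1)])
    have "A \<subseteq> fv.span (X \<union> T)" using T(2) fv.span_mono[of T "X \<union> T"] by blast
    then show "m \<in> Lam2 (fv.span (X \<union> T))" using m Lam2_mono by blast
  next
    fix l assume l: "lin_functional l" "\<forall>x\<in>X. l x = 0"
    obtain \<mu> where \<mu>: "lin_functional \<mu>" "\<forall>w\<in>AF B. \<mu> w = 0" "\<forall>a\<in>A. \<mu> (F a) = l a"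
      using lift_functional[OF l(1)] l(2) X(2) by blast
    have \<mu>_A: "\<forall>a\<in>A. \<mu> a = 0" using \<mu>(2) A_subset_AF by blast
    have \<mu>_AF: "\<forall>w\<in>AF X. \<mu> w = 0"
    proof
      fix w assume "w \<in> AF X"
      then show "\<mu> w = 0" unfolding AF_def
        by (rule fk.linear_eq_0_on_span[OF \<mu>(1), rotated]) (use \<mu>_A \<mu>(3) l(2) X(3) in auto)
    qed
    have "contract l m = contract (\<mu> \<circ> F) m"
      using \<mu>(3) by (intro contract_cong_Lam2[OF l(1) _ _ m] Vector_Spaces.linear_compose[OF linear_F \<mu>(1)]) auto
    also have "\<dots> = contract \<mu> (tensor_deriv F m)"
      by (rule contract_tensor_deriv[OF linear_F \<mu>(1) \<mu>_A m, symmetric])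
    also have "\<dots> = 0" by (rule contract_eq_0_on_Lam2[OF \<mu>(1) \<mu>_AF Dm])
    finally show "contract l m = 0" .
  qed
qed

end

locale free_pseudosolution = free_extension A B F s c
  for A B :: "('i \<Rightarrow> 'k::field) set" and F s c +
  fixes NV :: "('i \<times> 'i \<Rightarrow> 'k) set"
  assumes subspace_NV: "fv.subspace NV"
    and derivation_B: "tensor_deriv F ` (NV \<inter> Lam2 B) \<subseteq> NV"
begin

definition NU :: "('i \<times> 'i \<Rightarrow> 'k) set" where
  "NU = fv.span (NV \<inter> Lam2 (AF B) \<union> tensor_deriv F ` (NV \<inter> Lam2 A))"

lemma subspace_NV_Lam2: "fv.subspace (NV \<inter> Lam2 X)"
  by (rule fv.subspace_inter[OF subspace_NV subspace_Lam2])

lemma subspace_NU: "fv.subspace NU"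
  by (simp add: NU_def)

lemma tensor_deriv_NV_Lam2_B: "tensor_deriv F ` (NV \<inter> Lam2 B) \<subseteq> NV \<inter> Lam2 (AF B)"
proof
  fix v assume "v \<in> tensor_deriv F ` (NV \<inter> Lam2 B)"
  then obtain m where m: "m \<in> NV \<inter> Lam2 B" and v: "v = tensor_deriv F m" by blast
  have "tensor_deriv F m \<in> Lam2 (AF B)"
    using B_subset_A A_subset_AF[of B] image_subset_AF[of B] m
    by (intro tensor_deriv_in_Lam2[OF linear_F, of B]) auto
  with derivation_B m v show "v \<in> NV \<inter> Lam2 (AF B)" by blast
qed

lemma NU_decomp:
  assumes "v \<in> NU"
  obtains n m where "n \<in> NV \<inter> Lam2 (AF B)" and "m \<in> NV \<inter> Lam2 A" and "v = n + tensor_deriv F m"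
proof -
  have span_NV_Lam2: "fv.span (NV \<inter> Lam2 X) = NV \<inter> Lam2 X" for X
    using subspace_NV_Lam2 by simp
  have span_D: "fv.span (tensor_deriv F ` (NV \<inter> Lam2 A)) = tensor_deriv F ` (NV \<inter> Lam2 A)"
    using ff.linear_span_image[OF linear_tensor_deriv[OF linear_F], of "NV \<inter> Lam2 A"]
    unfolding span_NV_Lam2 .
  show ?thesis
    using assms that unfolding NU_def fv.span_Un span_NV_Lam2 span_D by blast
qed

lemma NU_Int_Lam2_AF_decomp:
  assumes X: "fv.subspace X" "B \<subseteq> X" "X \<subseteq> A" and v: "v \<in> NU \<inter> Lam2 (AF X)"
  obtains n m where "n \<in> NV \<inter> Lam2 (AF B)" and "m \<in> NV \<inter> Lam2 X" and "v = n + tensor_deriv F m"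
proof -
  obtain n m where n: "n \<in> NV \<inter> Lam2 (AF B)" and m: "m \<in> NV \<inter> Lam2 A"
    and v_eq: "v = n + tensor_deriv F m"
    using v NU_decomp by blast
  have "n \<in> Lam2 (AF X)" using n Lam2_mono[OF AF_mono[OF X(2)]] by blast
  then have "tensor_deriv F m \<in> Lam2 (AF X)"
    using v v_eq fv.subspace_diff[OF subspace_Lam2, of v "AF X" n] by simp
  then have "m \<in> Lam2 X"
    using m by (intro Lam2_of_tensor_deriv_in_Lam2_AF[OF X]) auto
  then show ?thesis using that n m v_eq by blast
qed

lemma NU_Int_Lam2_AF_B: "NU \<inter> Lam2 (AF B) = NV \<inter> Lam2 (AF B)"
proof
  show "NU \<inter> Lam2 (AF B) \<subseteq> NV \<inter> Lam2 (AF B)"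
  proof
    fix v assume "v \<in> NU \<inter> Lam2 (AF B)"
    then obtain n m where "n \<in> NV \<inter> Lam2 (AF B)" "m \<in> NV \<inter> Lam2 B" "v = n + tensor_deriv F m"
      by (rule NU_Int_Lam2_AF_decomp[OF subspace_B order_refl B_subset_A])
    then show "v \<in> NV \<inter> Lam2 (AF B)"
      using tensor_deriv_NV_Lam2_B fv.subspace_add[OF subspace_NV_Lam2] by blast
  qed
  show "NV \<inter> Lam2 (AF B) \<subseteq> NU \<inter> Lam2 (AF B)"
    unfolding NU_def using fv.span_superset[of "NV \<inter> Lam2 (AF B) \<union> tensor_deriv F ` (NV \<inter> Lam2 A)"]
    by blast
qed

lemma tensor_deriv_mem_NU_Lam2_AF:
  assumes "A' \<subseteq> A" and m: "m \<in> NV \<inter> Lam2 A'"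
  shows "tensor_deriv F m \<in> NU \<inter> Lam2 (AF A')"
proof
  have "m \<in> NV \<inter> Lam2 A" using m Lam2_mono[OF assms(1)] by blast
  then show "tensor_deriv F m \<in> NU" unfolding NU_def by (blast intro: fv.span_base)
  show "tensor_deriv F m \<in> Lam2 (AF A')"
    using m assms(1) A_subset_AF[of A'] image_subset_AF[of A']
    by (intro tensor_deriv_in_Lam2[OF linear_F, of A']) auto
qed

lemma rel_basis_NU:
  assumes A': "fv.subspace A'" "B \<subseteq> A'" "A' \<subseteq> A"
    and e: "rel_basis (NV \<inter> Lam2 A') (NV \<inter> Lam2 B) t e"
  shows "rel_basis (NU \<inter> Lam2 (AF A')) (NU \<inter> Lam2 (AF B)) t (tensor_deriv F \<circ> e)"
proof -
  let ?D = "tensor_deriv F" and ?NB = "NV \<inter> Lam2 B" and ?NW = "NV \<inter> Lam2 (AF B)"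
  from e have eA': "\<forall>i<t. e i \<in> NV \<inter> Lam2 A'" and span_e: "fv.span (?NB \<union> e ` {..<t}) = NV \<inter> Lam2 A'"
    and ind: "\<forall>u. (\<Sum>i<t. fscale (u i) (e i)) \<in> ?NB \<longrightarrow> (\<forall>i<t. u i = 0)"
    by (auto simp: rel_basis_def vspan_eq)
  note D_NA' = tensor_deriv_mem_NU_Lam2_AF[OF A'(3)]
  have NW_sub: "?NW \<subseteq> NU \<inter> Lam2 (AF A')"
    using NU_Int_Lam2_AF_B Lam2_mono[OF AF_mono[OF A'(2)]] by blast
  let ?X = "fv.span (?NW \<union> (?D \<circ> e) ` {..<t})"
  show ?thesis
    unfolding rel_basis_def vspan_eq NU_Int_Lam2_AF_B
  proof (intro conjI allI impI)
    fix i assume "i < t"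
    then show "(?D \<circ> e) i \<in> NU \<inter> Lam2 (AF A')" using eA' D_NA' by simp
  next
    show "?X = NU \<inter> Lam2 (AF A')"
    proof
      show "?X \<subseteq> NU \<inter> Lam2 (AF A')"
        using NW_sub eA' D_NA'
        by (intro fv.span_minimal fv.subspace_inter subspace_NU subspace_Lam2) auto
      show "NU \<inter> Lam2 (AF A') \<subseteq> ?X"
      proof
        fix v assume "v \<in> NU \<inter> Lam2 (AF A')"
        then obtain n m where n: "n \<in> ?NW" and m: "m \<in> NV \<inter> Lam2 A'" and v: "v = n + ?D m"
          by (rule NU_Int_Lam2_AF_decomp[OF A'])
        have "?D m \<in> ?D ` fv.span (?NB \<union> e ` {..<t})" using m span_e by simp
        also have "\<dots> = fv.span (?D ` (?NB \<union> e ` {..<t}))"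
          by (rule ff.linear_span_image[OF linear_tensor_deriv[OF linear_F], symmetric])
        also have "\<dots> \<subseteq> ?X"
          using tensor_deriv_NV_Lam2_B by (intro fv.span_mono) (auto simp: image_comp)
        finally show "v \<in> ?X"
          using n v fv.span_superset[of "?NW \<union> (?D \<circ> e) ` {..<t}"] by (auto intro: fv.span_add)
      qed
    qed
  next
    fix u i assume u: "(\<Sum>i<t. fscale (u i) ((?D \<circ> e) i)) \<in> ?NW" and i: "i < t"
    let ?m = "\<Sum>i<t. fscale (u i) (e i)"
    have m: "?m \<in> NV \<inter> Lam2 A'"
      using eA' by (intro fv.subspace_sum[OF subspace_NV_Lam2] fv.subspace_scale[OF subspace_NV_Lam2]) auto
    have "?D ?m \<in> Lam2 (AF B)"
      using u by (simp add: ff.linear_sum[OF linear_tensor_deriv[OF linear_F]]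
          ff.linear_scale[OF linear_tensor_deriv[OF linear_F]])
    then have "?m \<in> Lam2 B"
      using m A'(3) Lam2_mono[OF A'(3)]
      by (intro Lam2_of_tensor_deriv_in_Lam2_AF[OF subspace_B order_refl B_subset_A]) auto
    then show "u i = 0" using ind i m by blast
  qed
qed

lemma delta_AF:
  assumes "fv.subspace A'" and "B \<subseteq> A'" and "A' \<subseteq> A"
  shows "delta (\<lambda>X. NU \<inter> Lam2 X) (AF A') (AF B) = delta (\<lambda>X. NV \<inter> Lam2 X) A' B"
proof -
  obtain T where T: "finite T" "A = fv.span T" by (rule finite_span_A)
  obtain T' where T': "finite T'" "AF A \<subseteq> fv.span T'" by (rule AF_subset_finite_span)
  have "A' \<subseteq> fv.span T" using assms(3) T(2) by simp
  then obtain S where S: "finite S" "Lam2 A' \<subseteq> fv.span S" using Lam2_finite_span[OF T(1)] by blast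
  have "AF B \<subseteq> fv.span T'" using AF_mono[OF B_subset_A] T'(2) by (rule order_trans)
  then obtain S' where S': "finite S'" "Lam2 (AF B) \<subseteq> fv.span S'" using Lam2_finite_span[OF T'(1)] by blast
  have NB_NA': "NV \<inter> Lam2 B \<subseteq> NV \<inter> Lam2 A'" using Lam2_mono[OF assms(2)] by blast
  have NA'_S: "NV \<inter> Lam2 A' \<subseteq> fv.span S" using S(2) by blast
  obtain t e where e: "rel_basis (NV \<inter> Lam2 A') (NV \<inter> Lam2 B) t e"
    using rel_basis_exists[OF subspace_NV_Lam2 subspace_NV_Lam2 NB_NA' S(1) NA'_S] by blast
  have "fv.dim (NV \<inter> Lam2 A') = fv.dim (NV \<inter> Lam2 B) + t"
    using NB_NA' NA'_S by (intro dim_rel_basis[OF e subspace_NV_Lam2 S(1)]) (rule order_trans)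
  moreover have "fv.dim (NU \<inter> Lam2 (AF A')) = fv.dim (NV \<inter> Lam2 (AF B)) + t"
    using dim_rel_basis[OF rel_basis_NU[OF assms e] _ S'(1)] S'(2)
    unfolding NU_Int_Lam2_AF_B using subspace_NV_Lam2 by blast
  ultimately show ?thesis
    using dim_AF[OF assms] by (simp add: delta_def vdim_eq NU_Int_Lam2_AF_B)
qed

end

lemma ssum_image_cong:
  assumes "\<forall>x\<in>X. F x = f x"
  shows "ssum A (f ` X) = fv.span (A \<union> F ` X)"
proof -
  have "F ` X = f ` X" using assms by (intro image_cong) auto
  then show ?thesis by (simp add: ssum_def vspan_eq)
qed

lemma free_pseudosolution_linear_extension:
  assumes "fv.subspace A" "fv.subspace B" "B \<subseteq> A" "fin_dim A" "fv.subspace NV"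
    and F: "lin_map F" "\<forall>x\<in>A. F x = f x"
    and deriv: "tilde f B ` (NV \<inter> Lam2 B) \<subseteq> NV"
    and basis: "rel_basis A B s c" "rel_basis (ssum A (f ` A)) (ssum A (f ` B)) s (f \<circ> c)"
  shows "free_pseudosolution A B F s c NV"
proof (intro free_pseudosolution.intro free_extension.intro free_pseudosolution_axioms.intro)
  have "ssum A (f ` B) = fv.span (A \<union> F ` B)" using F(2) assms(3) by (intro ssum_image_cong) blast
  then show "\<forall>u. (\<Sum>i<s. fscale (u i) (F (c i))) \<in> fv.span (A \<union> F ` B) \<longrightarrow> (\<forall>i<s. u i = 0)"
    using basis F(2) by (simp add: rel_basis_def)
  have "tilde f B m = tensor_deriv F m" if "m \<in> Lam2 B" for m
    using F assms(3) that by (intro tilde_eq_tensor_deriv) auto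
  then show "tensor_deriv F ` (NV \<inter> Lam2 B) \<subseteq> NV" using deriv by auto
qed (use assms in simp_all)

theorem lemma3p4:
  fixes V A B A' :: "('i \<Rightarrow> 'k::{field,finite}) set"
    and NV :: "('i \<times> 'i \<Rightarrow> 'k) set"
    and f :: "('i \<Rightarrow> 'k) \<Rightarrow> ('i \<Rightarrow> 'k)"
    and s :: nat and c :: "nat \<Rightarrow> ('i \<Rightarrow> 'k)"
  assumes V: "vsubspace V"
    and NV: "vsubspace NV" "NV \<subseteq> Lam2 V"
    and AB: "vsubspace A" "vsubspace B" "B \<subseteq> A" "A \<subseteq> V" "fin_dim A"
    and f_B: "f ` B \<subseteq> V"
    and f_deriv: "tilde f B ` (NV \<inter> Lam2 B) \<subseteq> NV"
    and f_lin: "lin_on A f"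
    and free_A: "rel_basis A B s c"
    and free_U: "rel_basis (ssum A (f ` A)) (ssum A (f ` B)) s (f \<circ> c)"
    and A': "vsubspace A'" "B \<subseteq> A'" "A' \<subseteq> A"
  defines "NU \<equiv> ssum (NV \<inter> Lam2 (ssum A (f ` B))) (tilde f A ` (NV \<inter> Lam2 A))"
  shows "(delta (\<lambda>X. NU \<inter> Lam2 X) (ssum A (f ` A')) (ssum A (f ` B))
           = delta (\<lambda>X. NV \<inter> Lam2 X) A' B) \<and>
         (\<forall>t e. rel_basis (NV \<inter> Lam2 A') (NV \<inter> Lam2 B) t e \<longrightarrow>
           rel_basis (NU \<inter> Lam2 (ssum A (f ` A'))) (NU \<inter> Lam2 (ssum A (f ` B))) t (tilde f A \<circ> e)) \<and>
         int (vdim (ssum A (f ` A'))) - int (vdim (ssum A (f ` B))) = int (vdim A') - int (vdim B)"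
proof -
  have A_sub: "fv.subspace A" and A'_sub: "fv.subspace A'"
    using AB(1) A'(1) by (simp_all add: vsubspace_eq)
  obtain F where F: "lin_map F" "\<forall>x\<in>A. F x = f x"
    using lin_on_extend[OF A_sub f_lin] by blast
  interpret P: free_pseudosolution A B F s c NV
    using AB NV(1) F f_deriv free_A free_U
    by (intro free_pseudosolution_linear_extension) (simp_all add: vsubspace_eq)
  have AF_eq: "P.AF X = ssum A (f ` X)" if "X \<subseteq> A" for X
    unfolding P.AF_def using F(2) that by (intro ssum_image_cong[symmetric]) blast
  have tilde_eq: "tilde f A m = tensor_deriv F m" if "m \<in> Lam2 A" for m
    using F that by (intro tilde_eq_tensor_deriv) auto
  then have "tilde f A ` (NV \<inter> Lam2 A) = tensor_deriv F ` (NV \<inter> Lam2 A)" by (intro image_cong) auto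
  then have "NU = P.NU"
    unfolding NU_def P.NU_def AF_eq[OF AB(3), symmetric] by (simp add: ssum_def vspan_eq)
  moreover have "rel_basis X Y t (tilde f A \<circ> e) = rel_basis X Y t (tensor_deriv F \<circ> e)"
    if "rel_basis (NV \<inter> Lam2 A') (NV \<inter> Lam2 B) t e" for X Y t e
    using that Lam2_mono[OF A'(3)] tilde_eq by (intro rel_basis_cong) (auto simp: rel_basis_def)
  ultimately show ?thesis
    using P.delta_AF[OF A'_sub A'(2,3)] P.rel_basis_NU[OF A'_sub A'(2,3)] P.dim_AF[OF A'_sub A'(2,3)]
      AF_eq A'(3) AB(3)
    by (simp add: vdim_eq)
qed

end
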